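(* In the one-shot wage theft problem described in the context, suppose $C'(0)<Py_H-Py_L$ and let $a^*$ be an optimal effort level (a maximizer of $g$ on $[0,1)$). Then every optimal solution of the problem with effort level $a^*$ has promised wages $w_i^*(a^* )$ and wage thefts $b_i^*(a^* )$, $i\in\{H,L\}$; i.e. these are the unique optimal wages and wage thefts.
   Context: Fix $P>0$, $y_H>y_L\ge 0$, a real number $u$ (reservation utility) and $\gamma\in(0,1]$ (inspection probability). Let $C:[0,1)\to\mathbb{R}$ be the worker's effort cost: $C(0)=0$, $C$ increasing, strictly convex, twice differentiable, $C(a)\to\infty$ as $a\to1$. Let $\eta:[0,\infty)\to\mathbb{R}$ be the penalty: strictly convex, increasing, twice differentiable, $\eta(0)=0$. The one-shot wage theft problem is: choose $a,w_H,w_L,b_H,b_L$ to maximize $a\,(Py_H-w_H+b_H-\gamma\eta(b_H))+(1-a)\,(Py_L-w_L+b_L-\gamma\eta(b_L))$ subject to $a\in\arg\max_{a'\in[0,1)}\{a'w_H+(1-a')w_L-C(a')\}$; $a w_H+(1-a)w_L-C(a)\ge u$; $w_H,w_L\ge0$; $0\le b_L\le w_L$, $0\le b_H\le w_H$; $a\in[0,1)$. Let $\beta\ge0$ satisfy $\gamma\eta'(\beta)=1$ (assumed to exist). For $a\in[0,1)$ define $w_L^*(a)=\max\{0,u-aC'(a)+C(a)\}$, $w_H^*(a)=w_L^*(a)+C'(a)$, $b_i^*(a)=\min\{\beta,w_i^*(a)\}$, and $g(a)=a\,(Py_H-w_H^*(a)+b_H^*(a)-\gamma\eta(b_H^*(a)))+(1-a)\,(Py_L-w_L^*(a)+b_L^*(a)-\gamma\eta(b_L^*(a)))$;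 optimal effort levels are the maximizers of $g$ on $[0,1)$. *)

theory Defs
  imports "HOL-Analysis.Analysis"
begin

definition strictly_convex_on :: "real set \<Rightarrow> (real \<Rightarrow> real) \<Rightarrow> bool" where
  "strictly_convex_on S f \<longleftrightarrow>
     (\<forall>x\<in>S. \<forall>y\<in>S. \<forall>t::real. x \<noteq> y \<longrightarrow> 0 < t \<longrightarrow> t < 1 \<longrightarrow>
        f (t * x + (1 - t) * y) < t * f x + (1 - t) * f y)"

definition wt_objective ::
  "real \<Rightarrow> real \<Rightarrow> real \<Rightarrow> real \<Rightarrow> (real \<Rightarrow> real) \<Rightarrow>
   real \<Rightarrow> real \<Rightarrow> real \<Rightarrow> real \<Rightarrow> real \<Rightarrow> real" where
  "wt_objective P yH yL \<gamma> \<eta> a wH wL bH bL =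
     a * (P * yH - wH + bH - \<gamma> * \<eta> bH) + (1 - a) * (P * yL - wL + bL - \<gamma> * \<eta> bL)"

definition wt_feasible ::
  "(real \<Rightarrow> real) \<Rightarrow> real \<Rightarrow> real \<Rightarrow> real \<Rightarrow> real \<Rightarrow> real \<Rightarrow> real \<Rightarrow> bool" where
  "wt_feasible C u a wH wL bH bL \<longleftrightarrow>
     a \<in> {0..<1} \<and>
     (\<forall>a'\<in>{0..<1}. a' * wH + (1 - a') * wL - C a' \<le> a * wH + (1 - a) * wL - C a) \<and>
     a * wH + (1 - a) * wL - C a \<ge> u \<and>
     wH \<ge> 0 \<and> wL \<ge> 0 \<and> 0 \<le> bL \<and> bL \<le> wL \<and> 0 \<le> bH \<and> bH \<le> wH"

definition wt_optimal ::
  "real \<Rightarrow> real \<Rightarrow> real \<Rightarrow> real \<Rightarrow> real \<Rightarrow> (real \<Rightarrow> real) \<Rightarrow> (real \<Rightarrow> real) \<Rightarrow>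
   real \<Rightarrow> real \<Rightarrow> real \<Rightarrow> real \<Rightarrow> real \<Rightarrow> bool" where
  "wt_optimal P yH yL u \<gamma> C \<eta> a wH wL bH bL \<longleftrightarrow>
     wt_feasible C u a wH wL bH bL \<and>
     (\<forall>a' wH' wL' bH' bL'. wt_feasible C u a' wH' wL' bH' bL' \<longrightarrow>
        wt_objective P yH yL \<gamma> \<eta> a' wH' wL' bH' bL' \<le> wt_objective P yH yL \<gamma> \<eta> a wH wL bH bL)"

text \<open>Candidate wages and thefts; C' is the derivative of C.\<close>
definition wL_star :: "(real \<Rightarrow> real) \<Rightarrow> (real \<Rightarrow> real) \<Rightarrow> real \<Rightarrow> real \<Rightarrow> real" where
  "wL_star C C' u a = max 0 (u - a * C' a + C a)"

definition wH_star :: "(real \<Rightarrow> real) \<Rightarrow> (real \<Rightarrow> real) \<Rightarrow> real \<Rightarrow> real \<Rightarrow> real" where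
  "wH_star C C' u a = wL_star C C' u a + C' a"

definition b_star :: "real \<Rightarrow> real \<Rightarrow> real" where
  "b_star \<beta> w = min \<beta> w"

definition g_fun ::
  "real \<Rightarrow> real \<Rightarrow> real \<Rightarrow> real \<Rightarrow> real \<Rightarrow> (real \<Rightarrow> real) \<Rightarrow> (real \<Rightarrow> real) \<Rightarrow>
   (real \<Rightarrow> real) \<Rightarrow> real \<Rightarrow> real \<Rightarrow> real" where
  "g_fun P yH yL u \<gamma> C C' \<eta> \<beta> a =
     wt_objective P yH yL \<gamma> \<eta> a (wH_star C C' u a) (wL_star C C' u a)
       (b_star \<beta> (wH_star C C' u a)) (b_star \<beta> (wL_star C C' u a))"

end

theory Submission
  imports Defs
begin

text \<open>Since \<open>b \<mapsto> \<gamma> \<eta> b - b\<close> is strictly convex with critical point \<open>\<beta>\<close>, the firm's unique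
  best theft from a wage \<open>w\<close> is \<open>min \<beta> w\<close>, and the resulting value of paying \<open>w\<close> is strictly
  decreasing in \<open>w\<close>. The optimal effort is positive, because moving from effort 0 to a small
  \<open>a\<close> gains at least \<open>a (P yH - P yL - C' a) > 0\<close> (here continuity of \<open>C'\<close> at 0 is used). At an
  interior effort the worker's first-order condition pins down \<open>wH - wL = C' a\<close>, participation
  gives \<open>wL \<ge> wL_star a\<close>, and the candidate contract is feasible; strict monotonicity of the
  wage value then forces \<open>wL = wL_star a\<close> and both thefts to be the best ones.\<close>

lemma strictly_convex_onD:
  assumes "strictly_convex_on S f" and "x \<in> S" "y \<in> S" "x \<noteq> y" "0 < t" "t < 1"
  shows "f (t * x + (1 - t) * y) < t * f x + (1 - t) * f y"
  using assms unfolding strictly_convex_on_def by blast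

lemma strictly_convex_on_imp_convex_on:
  fixes f :: "real \<Rightarrow> real"
  assumes "strictly_convex_on S f" and "convex S"
  shows "convex_on S f"
proof (rule convex_onI[OF _ \<open>convex S\<close>])
  fix t x y :: real assume "0 < t" "t < 1" "x \<in> S" "y \<in> S"
  then have "x \<noteq> y \<Longrightarrow> f ((1 - t) * x + (1 - (1 - t)) * y) < (1 - t) * f x + (1 - (1 - t)) * f y"
    by (intro strictly_convex_onD[OF assms(1)]) auto
  then show "f ((1 - t) *\<^sub>R x + t *\<^sub>R y) \<le> (1 - t) * f x + t * f y"
    by (cases "x = y") (simp_all add: algebra_simps)
qed

lemma convex_on_above_tangent_within:
  fixes f :: "real \<Rightarrow> real"
  assumes convex: "convex_on S f" and "c \<in> S" "x \<in> S"
    and deriv: "(f has_real_derivative D) (at c within S)"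
  shows "D * (x - c) \<le> f x - f c"
proof -
  define p where "p t = (1 - t) * c + t * x" for t
  have p_in: "p ` {0..1} \<subseteq> S"
    using convex \<open>c \<in> S\<close> \<open>x \<in> S\<close> by (auto simp: p_def convex_on_def convex_alt)
  have "(f has_real_derivative D) (at (p 0) within p ` {0..1})"
    using DERIV_subset[OF deriv p_in] by (simp add: p_def)
  moreover have "(p has_real_derivative x - c) (at 0 within {0..1})"
    unfolding p_def by (auto intro!: derivative_eq_intros)
  ultimately have "(f \<circ> p has_real_derivative D * (x - c)) (at 0 within {0..1})"
    by (rule DERIV_image_chain)
  then have "(f \<circ> p has_real_derivative D * (x - c)) (at_right 0)"
    by (simp add: at_within_Icc_at_right)
  then have lim: "((\<lambda>t. (f (p t) - f c) / t) \<longlongrightarrow> D * (x - c)) (at_right 0)"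
    by (simp add: has_field_derivative_iff p_def)
  have "\<forall>\<^sub>F t in at_right 0. (f (p t) - f c) / t \<le> f x - f c"
    using eventually_at_right_real[OF zero_less_one]
  proof (rule eventually_mono)
    fix t :: real assume t: "t \<in> {0<..<1}"
    then have "f (p t) \<le> (1 - t) * f c + t * f x"
      using convex_onD[OF convex, of t c x] \<open>c \<in> S\<close> \<open>x \<in> S\<close> by (simp add: p_def)
    then show "(f (p t) - f c) / t \<le> f x - f c" using t by (simp add: field_simps)
  qed
  then show ?thesis using tendsto_upperbound[OF lim] by simp
qed

lemma strictly_convex_on_strictly_above_tangent:
  fixes f :: "real \<Rightarrow> real"
  assumes strict: "strictly_convex_on S f" and "convex S" and "c \<in> S" "x \<in> S" "x \<noteq> c"
    and deriv: "(f has_real_derivative D) (at c within S)"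
  shows "D * (x - c) < f x - f c"
proof -
  define m where "m = (x + c) / 2"
  have "m \<in> S"
    using convexD[OF \<open>convex S\<close> \<open>x \<in> S\<close> \<open>c \<in> S\<close>, of "1/2" "1/2"]
    by (simp add: m_def add_divide_distrib)
  then have "D * (m - c) \<le> f m - f c"
    using convex_on_above_tangent_within[OF strictly_convex_on_imp_convex_on] assms by blast
  moreover have "f m < (f x + f c) / 2"
    using strictly_convex_onD[OF strict \<open>x \<in> S\<close> \<open>c \<in> S\<close> \<open>x \<noteq> c\<close>, of "1/2"]
    by (simp add: m_def field_simps)
  ultimately show ?thesis by (simp add: m_def field_simps)
qed

lemma strictly_convex_on_scale_add_linear:
  fixes f :: "real \<Rightarrow> real"
  assumes "strictly_convex_on S f" and "0 < c"
  shows "strictly_convex_on S (\<lambda>x. c * f x + m * x)"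
  unfolding strictly_convex_on_def
proof (intro ballI allI impI)
  fix x y t :: real assume "x \<in> S" "y \<in> S" "x \<noteq> y" "0 < t" "t < 1"
  then have "c * f (t * x + (1 - t) * y) < c * (t * f x + (1 - t) * f y)"
    using strictly_convex_onD[OF assms(1)] \<open>0 < c\<close> by simp
  then show "c * f (t * x + (1 - t) * y) + m * (t * x + (1 - t) * y)
      < t * (c * f x + m * x) + (1 - t) * (c * f y + m * y)"
    by (simp add: algebra_simps)
qed

lemma strictly_convex_on_min_clamp_argmin:
  fixes f :: "real \<Rightarrow> real"
  assumes strict: "strictly_convex_on {0..} f" and "0 \<le> \<beta>"
    and deriv: "(f has_real_derivative 0) (at \<beta> within {0..})"
    and "0 \<le> b" "b \<le> w" "b \<noteq> min \<beta> w"
  shows "f (min \<beta> w) < f b"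
proof -
  have below: "f \<beta> < f x" if "0 \<le> x" "x \<noteq> \<beta>" for x
    using strictly_convex_on_strictly_above_tangent[OF strict convex_real_interval(1) _ _ _ deriv]
      that \<open>0 \<le> \<beta>\<close> by simp
  show ?thesis
  proof (cases "\<beta> \<le> w")
    case True
    then show ?thesis using below assms by simp
  next
    case False
    then have "b < w" "w < \<beta>" using assms by auto
    define t where "t = (\<beta> - w) / (\<beta> - b)"
    have t: "0 < t" "t < 1"
      using \<open>b < w\<close> \<open>w < \<beta>\<close> by (auto simp: t_def field_simps)
    have "t * (\<beta> - b) = \<beta> - w"
      using \<open>b < w\<close> \<open>w < \<beta>\<close> by (simp add: t_def)
    then have w: "w = t * b + (1 - t) * \<beta>"
      by (simp add: algebra_simps)
    have "f w < t * f b + (1 - t) * f \<beta>"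
      unfolding w using strictly_convex_onD[OF strict _ _ _ t] \<open>0 \<le> b\<close> \<open>b < w\<close> \<open>w < \<beta>\<close> by simp
    also have "\<dots> < t * f b + (1 - t) * f b"
      using below[of b] \<open>0 \<le> b\<close> \<open>b < w\<close> \<open>w < \<beta>\<close> t
      by (intro add_strict_left_mono mult_strict_left_mono) auto
    also have "\<dots> = f b"
      by (simp add: algebra_simps)
    finally show ?thesis using False by simp
  qed
qed

locale wage_theft =
  fixes P yH yL u \<gamma> \<beta> :: real and C C' \<eta> :: "real \<Rightarrow> real"
  assumes gamma_pos: "0 < \<gamma>"
    and beta_nonneg: "0 \<le> \<beta>"
    and eta_incr: "strict_mono_on {0..} \<eta>"
    and eta_convex: "strictly_convex_on {0..} \<eta>"
    and eta_deriv_beta: "(\<eta> has_real_derivative 1 / \<gamma>) (at \<beta> within {0..})"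
    and C0: "C 0 = 0"
    and C_incr: "strict_mono_on {0..<1} C"
    and C_convex: "strictly_convex_on {0..<1} C"
    and C_deriv: "\<And>a. a \<in> {0..<1} \<Longrightarrow> (C has_real_derivative C' a) (at a within {0..<1})"
begin

abbreviation "objective \<equiv> wt_objective P yH yL \<gamma> \<eta>"
abbreviation "feasible \<equiv> wt_feasible C u"
abbreviation "optimal \<equiv> wt_optimal P yH yL u \<gamma> C \<eta>"
abbreviation "g \<equiv> g_fun P yH yL u \<gamma> C C' \<eta> \<beta>"

definition theft_gain :: "real \<Rightarrow> real" where
  "theft_gain b = b - \<gamma> * \<eta> b"

text \<open>\<open>min \<beta> w\<close> is the firm's best theft from a wage \<open>w\<close> (\<open>theft_gain_less_min_theft\<close>), so
  \<open>contract_value\<close> is the objective with both thefts chosen optimally.\<close>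
definition wage_value :: "real \<Rightarrow> real" where
  "wage_value w = theft_gain (min \<beta> w) - w"

definition contract_value :: "real \<Rightarrow> real \<Rightarrow> real \<Rightarrow> real" where
  "contract_value a wH wL = a * (P * yH + wage_value wH) + (1 - a) * (P * yL + wage_value wL)"

lemma objective_eq_contract_value:
  "objective a wH wL bH bL = contract_value a wH wL
     - a * (theft_gain (min \<beta> wH) - theft_gain bH) - (1 - a) * (theft_gain (min \<beta> wL) - theft_gain bL)"
  by (simp add: wt_objective_def contract_value_def wage_value_def theft_gain_def algebra_simps)

lemma g_eq_contract_value:
  "g a = contract_value a (wH_star C C' u a) (wL_star C C' u a)"
  by (simp add: g_fun_def b_star_def objective_eq_contract_value)

lemma theft_gain_less_min_theft:
  assumes "0 \<le> b" "b \<le> w" "b \<noteq> min \<beta> w"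
  shows "theft_gain b < theft_gain (min \<beta> w)"
proof -
  have "((\<lambda>b. \<gamma> * \<eta> b + (-1) * b) has_real_derivative \<gamma> * (1 / \<gamma>) + (-1)) (at \<beta> within {0..})"
    by (auto intro!: derivative_eq_intros eta_deriv_beta)
  then have "((\<lambda>b. \<gamma> * \<eta> b + (-1) * b) has_real_derivative 0) (at \<beta> within {0..})"
    using gamma_pos by simp
  from strictly_convex_on_min_clamp_argmin[OF
      strictly_convex_on_scale_add_linear[OF eta_convex gamma_pos] beta_nonneg this assms]
  show ?thesis by (simp add: theft_gain_def)
qed

lemma theft_gain_le_min_theft:
  "0 \<le> b \<Longrightarrow> b \<le> w \<Longrightarrow> theft_gain b \<le> theft_gain (min \<beta> w)"
  using theft_gain_less_min_theft[of b w] by (cases "b = min \<beta> w") auto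

lemma wage_value_strict_antimono:
  assumes "0 \<le> w1" "w1 < w2"
  shows "wage_value w2 < wage_value w1"
proof (cases "min \<beta> w1 = min \<beta> w2")
  case True
  then show ?thesis using assms by (simp add: wage_value_def)
next
  case False
  then have "min \<beta> w1 < min \<beta> w2" using assms by linarith
  then have "\<eta> (min \<beta> w1) < \<eta> (min \<beta> w2)"
    using strict_mono_onD[OF eta_incr] assms beta_nonneg by simp
  then have "\<gamma> * \<eta> (min \<beta> w1) < \<gamma> * \<eta> (min \<beta> w2)"
    using gamma_pos by simp
  moreover have "min \<beta> w2 - min \<beta> w1 \<le> w2 - w1" using assms by linarith
  ultimately show ?thesis unfolding wage_value_def theft_gain_def by linarith
qed

lemma wage_value_raise:
  assumes "0 \<le> w1" "w1 \<le> w2"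
  shows "wage_value w1 - (w2 - w1) \<le> wage_value w2"
  using theft_gain_le_min_theft[of "min \<beta> w1" w2] assms beta_nonneg
  by (simp add: wage_value_def)

lemma contract_value_strict_antimono:
  assumes "a \<in> {0..1}" "0 \<le> wH'" "wH' < wH" "0 \<le> wL'" "wL' < wL"
  shows "contract_value a wH wL < contract_value a wH' wL'"
proof -
  have H: "wage_value wH < wage_value wH'" and L: "wage_value wL < wage_value wL'"
    using wage_value_strict_antimono assms by auto
  have "a * wage_value wH \<le> a * wage_value wH'" "(1 - a) * wage_value wL \<le> (1 - a) * wage_value wL'"
    using H L assms(1) by (auto intro!: mult_left_mono)
  moreover have "a * wage_value wH < a * wage_value wH' \<or> (1 - a) * wage_value wL < (1 - a) * wage_value wL'"
    using H L assms(1) by (cases "a = 0") auto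
  ultimately show ?thesis
    unfolding contract_value_def by (auto simp: algebra_simps)
qed

lemma objective_le_contract_value:
  assumes "a \<in> {0..1}" "0 \<le> bH" "bH \<le> wH" "0 \<le> bL" "bL \<le> wL"
  shows "objective a wH wL bH bL \<le> contract_value a wH wL"
proof -
  have "0 \<le> a * (theft_gain (min \<beta> wH) - theft_gain bH)"
    "0 \<le> (1 - a) * (theft_gain (min \<beta> wL) - theft_gain bL)"
    using theft_gain_le_min_theft[of bH wH] theft_gain_le_min_theft[of bL wL] assms by auto
  then show ?thesis
    by (simp add: objective_eq_contract_value)
qed

lemma objective_less_contract_value:
  assumes "a \<in> {0<..<1}" "0 \<le> bH" "bH \<le> wH" "0 \<le> bL" "bL \<le> wL"
    and "bH \<noteq> min \<beta> wH \<or> bL \<noteq> min \<beta> wL"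
  shows "objective a wH wL bH bL < contract_value a wH wL"
proof -
  have "0 \<le> a * (theft_gain (min \<beta> wH) - theft_gain bH)"
    "0 \<le> (1 - a) * (theft_gain (min \<beta> wL) - theft_gain bL)"
    using theft_gain_le_min_theft[of bH wH] theft_gain_le_min_theft[of bL wL] assms by auto
  moreover have "0 < a * (theft_gain (min \<beta> wH) - theft_gain bH)
      \<or> 0 < (1 - a) * (theft_gain (min \<beta> wL) - theft_gain bL)"
    using theft_gain_less_min_theft[of bH wH] theft_gain_less_min_theft[of bL wL] assms by auto
  ultimately show ?thesis
    by (auto simp: objective_eq_contract_value)
qed

lemma C_above_tangent:
  "c \<in> {0..<1} \<Longrightarrow> x \<in> {0..<1} \<Longrightarrow> C' c * (x - c) \<le> C x - C c"
  using convex_on_above_tangent_within[OF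
      strictly_convex_on_imp_convex_on[OF C_convex convex_real_interval(7)] _ _ C_deriv]
  by blast

lemma C'_pos:
  assumes "a \<in> {0<..<1}"
  shows "0 < C' a"
proof -
  have "C' a * (0 - a) \<le> C 0 - C a" "C 0 < C a"
    using C_above_tangent[of a 0] strict_mono_onD[OF C_incr, of 0 a] assms by auto
  then have "0 < C' a * a"
    by (simp add: C0 algebra_simps)
  then show ?thesis
    using assms by (simp add: zero_less_mult_iff)
qed

lemma wL_star_le_wL_star_0:
  assumes "a \<in> {0..<1}"
  shows "wL_star C C' u a \<le> wL_star C C' u 0"
  using C_above_tangent[of a 0] assms by (simp add: wL_star_def C0 algebra_simps)

lemma feasible_star:
  assumes a: "a \<in> {0<..<1}"
  shows "feasible a (wH_star C C' u a) (wL_star C C' u a)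
    (b_star \<beta> (wH_star C C' u a)) (b_star \<beta> (wL_star C C' u a))"
  unfolding wt_feasible_def
proof (intro conjI ballI)
  show "u \<le> a * wH_star C C' u a + (1 - a) * wL_star C C' u a - C a"
    using max.cobounded2[of 0 "u - a * C' a + C a"]
    by (simp add: wH_star_def wL_star_def algebra_simps)
next
  fix a' :: real assume "a' \<in> {0..<1}"
  then have "C' a * (a' - a) \<le> C a' - C a"
    using C_above_tangent a by auto
  then show "a' * wH_star C C' u a + (1 - a') * wL_star C C' u a - C a'
      \<le> a * wH_star C C' u a + (1 - a) * wL_star C C' u a - C a"
    by (simp add: wH_star_def algebra_simps)
qed (use a C'_pos[OF a] beta_nonneg in \<open>auto simp: wH_star_def wL_star_def b_star_def\<close>)

lemma incentive_compatible_wage_gap: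
  assumes a: "a \<in> {0<..<1}"
    and IC: "\<forall>a'\<in>{0..<1}. a' * wH + (1 - a') * wL - C a' \<le> a * wH + (1 - a) * wL - C a"
  shows "wH = wL + C' a"
proof -
  have "(C has_real_derivative C' a) (at a)"
    using C_deriv[of a] at_within_interior[of a "{0..<1}"] a by simp
  then have "((\<lambda>y. y * wH + (1 - y) * wL - C y) has_real_derivative wH - wL - C' a) (at a)"
    by (auto intro!: derivative_eq_intros)
  moreover have "\<forall>y. \<bar>a - y\<bar> < min a (1 - a) \<longrightarrow>
      y * wH + (1 - y) * wL - C y \<le> a * wH + (1 - a) * wL - C a"
    using IC by (auto simp: abs_less_iff)
  ultimately have "wH - wL - C' a = 0"
    using a by (intro DERIV_local_max[of _ _ _ "min a (1 - a)"]) auto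
  then show ?thesis by simp
qed

lemma g_gain_over_zero:
  assumes a: "a \<in> {0<..<1}"
  shows "g 0 + a * (P * yH - P * yL - C' a) \<le> g a"
proof -
  define W where "W = wL_star C C' u a"
  have W: "0 \<le> W" "W \<le> wL_star C C' u 0"
    using wL_star_le_wL_star_0[of a] a by (auto simp: W_def wL_star_def)
  then have "wage_value (wL_star C C' u 0) \<le> wage_value W"
    using wage_value_strict_antimono[of W "wL_star C C' u 0"] by (cases "W = wL_star C C' u 0") auto
  then have "g 0 + a * (P * yH - P * yL - C' a)
      \<le> a * (P * yH + (wage_value W - C' a)) + (1 - a) * (P * yL + wage_value W)"
    by (simp add: g_eq_contract_value contract_value_def algebra_simps)
  also have "\<dots> \<le> a * (P * yH + wage_value (W + C' a)) + (1 - a) * (P * yL + wage_value W)"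
    using wage_value_raise[of W "W + C' a"] W C'_pos[OF a] a by (simp add: mult_left_mono)
  also have "\<dots> = g a"
    by (simp add: g_eq_contract_value contract_value_def wH_star_def W_def)
  finally show ?thesis .
qed

lemma optimal_effort_pos:
  assumes cont: "continuous (at 0 within {0..<1}) C'"
    and gap: "C' 0 < P * yH - P * yL"
    and a_opt: "a_opt \<in> {0..<1}" "\<forall>a\<in>{0..<1}. g a \<le> g a_opt"
  shows "0 < a_opt"
proof -
  have "(C' \<longlongrightarrow> C' 0) (at 0 within {0..<1})"
    using cont by (simp add: continuous_within)
  then have "(C' \<longlongrightarrow> C' 0) (at 0 within {0<..<1})"
    by (rule tendsto_within_subset) auto
  then have "\<forall>\<^sub>F a in at 0 within {0<..<1}. C' a < P * yH - P * yL"
    using gap by (rule order_tendstoD(2))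
  moreover have "\<forall>\<^sub>F a in at 0 within {0<..<1}. a \<in> {0<..<1}"
    by (simp add: eventually_at_filter)
  moreover have "at (0::real) within {0<..<1} \<noteq> bot"
    by (simp add: trivial_limit_within islimpt_greaterThanLessThan1)
  ultimately obtain a where a: "a \<in> {0<..<1}" "C' a < P * yH - P * yL"
    by (metis (mono_tags, lifting) eventually_conj eventually_happens')
  then have "0 < a * (P * yH - P * yL - C' a)"
    by simp
  then have "g 0 < g a"
    using g_gain_over_zero[OF a(1)] by linarith
  moreover have "g a \<le> g a_opt" using a_opt(2) a(1) by simp
  ultimately show ?thesis
    using a_opt(1) by (cases "a_opt = 0") auto
qed

lemma optimal_contract_unique:
  assumes a: "a \<in> {0<..<1}" and opt: "optimal a wH wL bH bL"
  shows "wH = wH_star C C' u a \<and> wL = wL_star C C' u a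
    \<and> bH = b_star \<beta> (wH_star C C' u a) \<and> bL = b_star \<beta> (wL_star C C' u a)"
proof -
  define W where "W = wL_star C C' u a"
  define d where "d = C' a"
  from opt have "feasible a wH wL bH bL"
    and best: "objective a (W + d) W (min \<beta> (W + d)) (min \<beta> W) \<le> objective a wH wL bH bL"
    using feasible_star[OF a]
    by (auto simp: wt_optimal_def W_def d_def wH_star_def b_star_def)
  then have IC: "\<forall>a'\<in>{0..<1}. a' * wH + (1 - a') * wL - C a' \<le> a * wH + (1 - a) * wL - C a"
    and PC: "u \<le> a * wH + (1 - a) * wL - C a"
    and bounds: "0 \<le> wL" "0 \<le> bH" "bH \<le> wH" "0 \<le> bL" "bL \<le> wL"
    by (auto simp: wt_feasible_def)
  have gap: "wH = wL + d"
    using incentive_compatible_wage_gap[OF a IC] by (simp add: d_def)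
  have W: "0 \<le> W" "W \<le> wL"
    using PC bounds(1) by (auto simp: W_def wL_star_def gap d_def algebra_simps)
  have d: "0 \<le> d" using C'_pos[OF a] by (simp add: d_def)
  have cand: "contract_value a (W + d) W \<le> objective a wH wL bH bL"
    using best by (simp add: objective_eq_contract_value)
  have wL: "wL = W"
  proof (rule ccontr)
    assume "wL \<noteq> W"
    then have "contract_value a wH wL < contract_value a (W + d) W"
      using contract_value_strict_antimono[of a "W + d" wH W wL] W d a gap by simp
    moreover have "objective a wH wL bH bL \<le> contract_value a wH wL"
      using objective_le_contract_value bounds a by simp
    ultimately show False
      using cand by simp
  qed
  have "bH = min \<beta> wH \<and> bL = min \<beta> wL"
  proof (rule ccontr)
    assume "\<not> (bH = min \<beta> wH \<and> bL = min \<beta> wL)"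
    then have "objective a wH wL bH bL < contract_value a wH wL"
      using objective_less_contract_value[OF a bounds(2-5)] by blast
    then show False
      using cand wL gap by simp
  qed
  then show ?thesis
    using wL gap by (simp add: W_def d_def wH_star_def b_star_def)
qed

end

theorem corollary1:
  fixes P yH yL u \<gamma> \<beta> a_opt :: real
    and C C' C'' \<eta> \<eta>' \<eta>'' :: "real \<Rightarrow> real"
  assumes P_pos: "P > 0" and y_ord: "yH > yL" and yL_nn: "yL \<ge> 0"
    and gamma: "0 < \<gamma>" "\<gamma> \<le> 1"
    and C0: "C 0 = 0"
    and C_incr: "strict_mono_on {0..<1} C"
    and C_convex: "strictly_convex_on {0..<1} C"
    and C_deriv: "\<And>a. a \<in> {0..<1} \<Longrightarrow> (C has_real_derivative C' a) (at a within {0..<1})"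
    and C_deriv2: "\<And>a. a \<in> {0..<1} \<Longrightarrow> (C' has_real_derivative C'' a) (at a within {0..<1})"
    and C_lim: "filterlim C at_top (at_left 1)"
    and eta0: "\<eta> 0 = 0"
    and eta_incr: "strict_mono_on {0..} \<eta>"
    and eta_convex: "strictly_convex_on {0..} \<eta>"
    and eta_deriv: "\<And>b. b \<in> {0..} \<Longrightarrow> (\<eta> has_real_derivative \<eta>' b) (at b within {0..})"
    and eta_deriv2: "\<And>b. b \<in> {0..} \<Longrightarrow> (\<eta>' has_real_derivative \<eta>'' b) (at b within {0..})"
    and beta: "\<beta> \<ge> 0" "\<gamma> * \<eta>' \<beta> = 1"
    and C'0: "C' 0 < P * yH - P * yL"
    and a_opt: "a_opt \<in> {0..<1}"
      "\<forall>a\<in>{0..<1}. g_fun P yH yL u \<gamma> C C' \<eta> \<beta> a \<le> g_fun P yH yL u \<gamma> C C' \<eta> \<beta> a_opt"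
  shows "\<forall>wH wL bH bL. wt_optimal P yH yL u \<gamma> C \<eta> a_opt wH wL bH bL \<longrightarrow>
           wH = wH_star C C' u a_opt \<and> wL = wL_star C C' u a_opt \<and>
           bH = b_star \<beta> (wH_star C C' u a_opt) \<and> bL = b_star \<beta> (wL_star C C' u a_opt)"
proof -
  have "\<eta>' \<beta> = 1 / \<gamma>"
    using beta gamma by (simp add: field_simps)
  then have "(\<eta> has_real_derivative 1 / \<gamma>) (at \<beta> within {0..})"
    using eta_deriv[of \<beta>] beta(1) by simp
  then interpret wage_theft P yH yL u \<gamma> \<beta> C C' \<eta>
    using gamma(1) beta(1) eta_incr eta_convex C0 C_incr C_convex C_deriv
    by unfold_locales
  have "continuous (at 0 within {0..<1}) C'"
    using C_deriv2[of 0] by (simp add: DERIV_continuous)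
  then have "0 < a_opt"
    using optimal_effort_pos C'0 a_opt by blast
  then have "a_opt \<in> {0<..<1}"
    using a_opt(1) by simp
  then show ?thesis
    using optimal_contract_unique by blast
qed

end
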